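(* Let $\beta\in(0,d]$ and let $Q\subset\mathbb{R}^d$ be a cube. Suppose $C'>0$ is a constant such that $$\sum_{k}\int_{Q_{k}} f \,d\mathcal{H}^{\beta,Q}_{\infty} \leq C' \int_{\cup_{k} Q_{k}} f\,d\mathcal{H}^{\beta,Q}_{\infty}$$ for every non-negative $f$ and every family of non-overlapping cubes $\{Q_{k}\}\subset\mathcal{D}(Q)$ which satisfies $\sum_{Q_{k} \subset Q'}l(Q_{k})^\beta \leq 2l(Q')^\beta$ for each $Q' \in \mathcal{D}(Q)$. Then $$\mathcal{H}^{\beta,Q}_{\infty}\left(\left\{ x: \mathcal{M}^{\beta,Q}_\infty f(x)>t\right\}\right) \leq \frac{C'}{t} \int_{\mathbb{R}^d} |f|\,d\mathcal{H}^{\beta,Q}_{\infty}$$ for all $t>0$ and all $f \in L^1(\mathbb{R}^d;\mathcal{H}^{\beta,Q}_{\infty})$.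
   Context: For a cube $Q=a+[0,\ell)^d$ (cubes are half-open), the dyadic lattice generated by $Q$ is $\mathcal{D}(Q)=\{a+2^{-j}\ell(m+[0,1)^d): j\in\mathbb{Z}, m\in\mathbb{Z}^d\}$. The dyadic Hausdorff content adapted to $Q$ is $\mathcal{H}^{\beta,Q}_{\infty}(E)= \inf \{\sum_{i} l(Q_i)^\beta : E \subset \bigcup_{i} Q_i,\ Q_i \in \mathcal{D}(Q) \}$, $l(\cdot)$ the side length. For $f\ge0$ and a set $A$, $\int_A f\,d\mathcal{H}^{\beta,Q}_\infty=\int_0^\infty \mathcal{H}^{\beta,Q}_\infty(\{x\in A:f(x)>t\})\,dt$. $f$ is $\mathcal{H}^{\beta,Q}_\infty$-quasicontinuous if for every $\epsilon>0$ there is an open $O$ with $\mathcal{H}^{\beta,Q}_\infty(O)<\epsilon$ and $f|_{O^c}$ continuous; $L^1(\mathbb{R}^d;\mathcal{H}^{\beta,Q}_\infty)$ is the set of such $f$ with $\int_{\mathbb{R}^d}|f|\,d\mathcal{H}^{\beta,Q}_\infty<\infty$. The dyadic maximal function is $\mathcal{M}^{\beta,Q}_\infty f(x) = \sup_{Q' \in\mathcal{D}(Q)} \chi_{Q'}(x)\, l(Q')^{-\beta} \int_{Q'} |f| \,d\mathcal{H}^{\beta,Q}_{\infty}$. *)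

theory Defs
  imports "HOL-Analysis.Analysis"
begin

text \<open>Half-open cube  b + [0,l)^d  in R^d (d = CARD('n)).\<close>
definition cube :: "real^'n \<Rightarrow> real \<Rightarrow> (real^'n) set" where
  "cube b l = {x. \<forall>i. b$i \<le> x$i \<and> x$i < b$i + l}"

text \<open>Side length of a cube (well defined for nonempty cubes).\<close>
definition sidelen :: "(real^'n) set \<Rightarrow> real" where
  "sidelen S = (SOME l. l > 0 \<and> (\<exists>b. S = cube b l))"

text \<open>Dyadic lattice generated by the cube Q = cube a l.\<close>
definition dyadic :: "real^'n \<Rightarrow> real \<Rightarrow> (real^'n) set set" where
  "dyadic a l = {cube (\<chi> i. a$i + 2 powr (- real_of_int j) * l * real_of_int (m i))
                      (2 powr (- real_of_int j) * l) | j m. True}"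

definition hcont :: "real \<Rightarrow> real^'n \<Rightarrow> real \<Rightarrow> (real^'n) set \<Rightarrow> ennreal" where
  "hcont \<beta> a l E = Inf {(\<Sum>\<^sub>\<infinity> C\<in>\<C>. ennreal (sidelen C powr \<beta>)) | \<C>.
        countable \<C> \<and> \<C> \<subseteq> dyadic a l \<and> E \<subseteq> \<Union>\<C>}"

definition choquet :: "real \<Rightarrow> real^'n \<Rightarrow> real \<Rightarrow> (real^'n) set \<Rightarrow> (real^'n \<Rightarrow> real) \<Rightarrow> ennreal" where
  "choquet \<beta> a l A f = (\<integral>\<^sup>+ t. indicator {0<..} t * hcont \<beta> a l {x\<in>A. f x > t} \<partial>lborel)"

definition quasicontinuous :: "real \<Rightarrow> real^'n \<Rightarrow> real \<Rightarrow> (real^'n \<Rightarrow> real) \<Rightarrow> bool" where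
  "quasicontinuous \<beta> a l f \<longleftrightarrow>
     (\<forall>\<epsilon>>0. \<exists>U. open U \<and> hcont \<beta> a l U < ennreal \<epsilon> \<and> continuous_on (- U) f)"

definition L1_content :: "real \<Rightarrow> real^'n \<Rightarrow> real \<Rightarrow> (real^'n \<Rightarrow> real) set" where
  "L1_content \<beta> a l = {f. quasicontinuous \<beta> a l f \<and> choquet \<beta> a l UNIV (\<lambda>x. \<bar>f x\<bar>) < \<infinity>}"

definition maxfun :: "real \<Rightarrow> real^'n \<Rightarrow> real \<Rightarrow> (real^'n \<Rightarrow> real) \<Rightarrow> real^'n \<Rightarrow> ennreal" where
  "maxfun \<beta> a l f x = (SUP Q'\<in>dyadic a l.
      indicator Q' x * ennreal (sidelen Q' powr (- \<beta>)) * choquet \<beta> a l Q' (\<lambda>y. \<bar>f y\<bar>))"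

end

theory Submission
  imports Defs
begin

text \<open>
  Every point of \<open>{M f > t}\<close> lies in a dyadic cube \<open>Q\<close> with
  \<open>l(Q)^\<beta> \<le> t\<^sup>-\<^sup>1 \<integral>\<^sub>Q |f|\<close>.  As \<open>\<integral>|f|\<close> is finite, these cubes have bounded side length,
  so the maximal ones form a disjoint family \<open>\<P>\<close> covering the level set.  For any
  \<open>M \<subseteq> \<P>\<close> satisfying the packing condition of the hypothesis,
  \<open>\<Sum>\<^sub>M l(P)^\<beta> \<le> t\<^sup>-\<^sup>1 \<Sum>\<^sub>M \<integral>\<^sub>P |f| \<le> (C'/t) \<integral>|f|\<close>, so it suffices to find such an \<open>M\<close>
  whose weight \<open>\<Sum>\<^sub>M l(P)^\<beta>\<close> dominates the content of \<open>\<Union>\<P>\<close>.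

  Take \<open>M\<close> maximal (Zorn).  Each \<open>P \<in> \<P>\<close> lies in a cube \<open>W\<close> that is heavy for \<open>M\<close>,
  i.e. \<open>l(W)^\<beta> \<le> \<Sum>{l(R)^\<beta> | R \<in> M, R \<subseteq> W}\<close>: either \<open>P \<in> M\<close>, or adding \<open>P\<close> to \<open>M\<close>
  violates the packing condition at some \<open>W \<supseteq> P\<close>, and since \<open>l(P) \<le> l(W)\<close> the cubes
  of \<open>M\<close> inside \<open>W\<close> must already weigh at least \<open>l(W)^\<beta>\<close>.  The maximal heavy cubes are
  disjoint and cover \<open>\<Union>\<P>\<close>, and their weights add up to at most the weight of \<open>M\<close>.
\<close>

section \<open>Dyadic cubes\<close>

definition dyadic_side :: "real \<Rightarrow> int \<Rightarrow> real" where
  "dyadic_side l j = 2 powr (- real_of_int j) * l"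

definition dyadic_cube :: "real^'n \<Rightarrow> real \<Rightarrow> int \<Rightarrow> ('n \<Rightarrow> int) \<Rightarrow> (real^'n) set" where
  "dyadic_cube a l j m =
     cube (\<chi> i. a$i + dyadic_side l j * real_of_int (m i)) (dyadic_side l j)"

definition dyadic_index :: "real^'n \<Rightarrow> real \<Rightarrow> int \<Rightarrow> real^'n \<Rightarrow> ('n \<Rightarrow> int)" where
  "dyadic_index a l j x = (\<lambda>i. \<lfloor>(x$i - a$i) / dyadic_side l j\<rfloor>)"

lemma dyadic_side_pos: "0 < l \<Longrightarrow> 0 < dyadic_side l j"
  by (simp add: dyadic_side_def)

lemma dyadic_side_le_iff: "0 < l \<Longrightarrow> dyadic_side l j \<le> dyadic_side l k \<longleftrightarrow> k \<le> j"
  by (simp add: dyadic_side_def)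

lemma dyadic_eq_range: "dyadic a l = range (\<lambda>(j, m). dyadic_cube a l j m)"
  unfolding dyadic_def dyadic_cube_def dyadic_side_def by (auto simp: mult.assoc)

lemma countable_dyadic: "countable (dyadic a l)"
  by (simp add: dyadic_eq_range)

lemma dyadicE:
  assumes "C \<in> dyadic a l"
  obtains j m where "C = dyadic_cube a l j m"
  using assms by (auto simp: dyadic_eq_range)

lemma mem_dyadic_cube_iff:
  assumes "0 < l"
  shows "x \<in> dyadic_cube a l j m \<longleftrightarrow> dyadic_index a l j x = m"
proof -
  define s where "s = dyadic_side l j"
  have "a$i + s * m i \<le> x$i \<and> x$i < a$i + s * m i + s \<longleftrightarrow> \<lfloor>(x$i - a$i) / s\<rfloor> = m i" for i
    using dyadic_side_pos[OF assms] by (simp add: s_def floor_eq_iff field_simps)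
  then show ?thesis
    unfolding dyadic_cube_def cube_def dyadic_index_def s_def[symmetric] by (auto simp: fun_eq_iff)
qed

lemma dyadic_index_coarsen:
  assumes "0 < l" "j \<le> k"
  shows "dyadic_index a l j x i = dyadic_index a l k x i div 2 ^ nat (k - j)"
proof -
  have "dyadic_side l j = dyadic_side l k * real_of_int (2 ^ nat (k - j))"
    using assms by (simp add: dyadic_side_def powr_realpow[symmetric] powr_add[symmetric])
  then have "(x$i - a$i) / dyadic_side l j
      = ((x$i - a$i) / dyadic_side l k) / real_of_int (2 ^ nat (k - j))"
    by (simp add: divide_divide_eq_left)
  moreover have "\<lfloor>((x$i - a$i) / dyadic_side l k) / real_of_int (2 ^ nat (k - j))\<rfloor>
      = \<lfloor>(x$i - a$i) / dyadic_side l k\<rfloor> div 2 ^ nat (k - j)"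
    by (rule floor_divide_real_eq_div) simp
  ultimately show ?thesis
    unfolding dyadic_index_def by metis
qed

lemma dyadic_cube_subset:
  assumes l: "0 < l" and "j \<le> k" and "x \<in> dyadic_cube a l k n" "x \<in> dyadic_cube a l j m"
  shows "dyadic_cube a l k n \<subseteq> dyadic_cube a l j m"
proof
  fix y assume "y \<in> dyadic_cube a l k n"
  then have "dyadic_index a l k y = dyadic_index a l k x"
    using assms by (simp add: mem_dyadic_cube_iff)
  then have "dyadic_index a l j y = dyadic_index a l j x"
    using assms by (simp add: fun_eq_iff dyadic_index_coarsen)
  then show "y \<in> dyadic_cube a l j m"
    using assms by (simp add: mem_dyadic_cube_iff)
qed

lemma cube_corner_mem: "0 < s \<Longrightarrow> b \<in> cube b s"
  by (simp add: cube_def)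

lemma cube_side_unique:
  assumes "0 < s" "0 < s'" and eq: "cube b s = cube b' s'"
  shows "s = s'"
proof -
  have "b \<in> cube b' s'" "b' \<in> cube b s"
    using assms cube_corner_mem by metis+
  then have b: "b' = b"
    by (auto simp: cube_def vec_eq_iff intro: antisym)
  have "b + (\<chi> i. min s s') \<in> cube b s \<longleftrightarrow> b + (\<chi> i. min s s') \<in> cube b s'"
    using eq b by simp
  then show ?thesis
    using assms(1,2) by (auto simp: cube_def min_def split: if_splits)
qed

lemma sidelen_cube: "0 < s \<Longrightarrow> sidelen (cube b s) = s"
  unfolding sidelen_def by (rule some_equality) (auto dest: cube_side_unique)

lemma sidelen_dyadic_cube: "0 < l \<Longrightarrow> sidelen (dyadic_cube a l j m) = dyadic_side l j"
  unfolding dyadic_cube_def by (simp add: sidelen_cube dyadic_side_pos)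

lemma sidelen_dyadic_pos: "0 < l \<Longrightarrow> C \<in> dyadic a l \<Longrightarrow> 0 < sidelen C"
  by (auto elim!: dyadicE simp: sidelen_dyadic_cube dyadic_side_pos)

lemma dyadic_nonempty: "0 < l \<Longrightarrow> C \<in> dyadic a l \<Longrightarrow> C \<noteq> {}"
  by (metis dyadicE dyadic_cube_def cube_corner_mem dyadic_side_pos empty_iff)

lemma dyadic_subset_or_disjoint:
  assumes l: "0 < l" and C: "C \<in> dyadic a l" "D \<in> dyadic a l"
    and le: "sidelen C \<le> sidelen D"
  shows "C \<subseteq> D \<or> C \<inter> D = {}"
proof -
  obtain k n where C_eq: "C = dyadic_cube a l k n" using C(1) by (rule dyadicE)
  obtain j m where D_eq: "D = dyadic_cube a l j m" using C(2) by (rule dyadicE)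
  have "j \<le> k" using le l by (simp add: C_eq D_eq sidelen_dyadic_cube dyadic_side_le_iff)
  then show ?thesis using dyadic_cube_subset[OF l] C_eq D_eq by blast
qed

lemma dyadic_laminar:
  assumes "0 < l" "C \<in> dyadic a l" "D \<in> dyadic a l"
  shows "C \<subseteq> D \<or> D \<subseteq> C \<or> C \<inter> D = {}"
  using dyadic_subset_or_disjoint[OF assms] dyadic_subset_or_disjoint[OF assms(1,3,2)] by force

lemma dyadic_subset_sidelen_le:
  assumes l: "0 < l" and C: "C \<in> dyadic a l" "D \<in> dyadic a l" and "C \<subseteq> D"
  shows "sidelen C \<le> sidelen D"
proof (rule ccontr)
  assume "\<not> ?thesis"
  then have "D \<subseteq> C \<or> D \<inter> C = {}" using dyadic_subset_or_disjoint[OF l C(2,1)] by simp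
  then have "C = D" using \<open>C \<subseteq> D\<close> dyadic_nonempty[OF l C(1)] by blast
  with \<open>\<not> ?thesis\<close> show False by simp
qed

lemma finite_dyadic_levels:
  assumes "0 < c" "0 < l"
  shows "finite {j. c \<le> dyadic_side l j \<and> dyadic_side l j \<le> B}"
proof (rule finite_subset)
  show "{j. c \<le> dyadic_side l j \<and> dyadic_side l j \<le> B}
      \<subseteq> {\<lceil>- log 2 (B / l)\<rceil> .. \<lfloor>- log 2 (c / l)\<rfloor>}"
  proof
    fix j assume j: "j \<in> {j. c \<le> dyadic_side l j \<and> dyadic_side l j \<le> B}"
    then have "c / l \<le> 2 powr (- real_of_int j)" "2 powr (- real_of_int j) \<le> B / l"
      using assms by (auto simp: dyadic_side_def field_simps)
    moreover have "0 < c / l" "0 < B / l"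
      using assms calculation(2) by (auto intro: less_le_trans[of 0 "2 powr (- real_of_int j)"])
    ultimately have "log 2 (c / l) \<le> - real_of_int j" "- real_of_int j \<le> log 2 (B / l)"
      using assms by (auto simp: log_le_iff le_log_iff)
    then show "j \<in> {\<lceil>- log 2 (B / l)\<rceil> .. \<lfloor>- log 2 (c / l)\<rfloor>}"
      by (auto simp: ceiling_le_iff le_floor_iff)
  qed
qed simp

lemma finite_dyadic_supersets:
  assumes l: "0 < l" and R: "R \<in> dyadic a l"
  shows "finite {W \<in> dyadic a l. R \<subseteq> W \<and> sidelen W \<le> B}"
proof -
  obtain x where x: "x \<in> R" using dyadic_nonempty[OF l R] by blast
  let ?J = "{j. sidelen R \<le> dyadic_side l j \<and> dyadic_side l j \<le> B}"
  have "{W \<in> dyadic a l. R \<subseteq> W \<and> sidelen W \<le> B}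
      \<subseteq> (\<lambda>j. dyadic_cube a l j (dyadic_index a l j x)) ` ?J"
  proof
    fix W assume W: "W \<in> {W \<in> dyadic a l. R \<subseteq> W \<and> sidelen W \<le> B}"
    then obtain j m where W_eq: "W = dyadic_cube a l j m" by (auto elim: dyadicE)
    have "m = dyadic_index a l j x" using W x W_eq l by (auto simp: mem_dyadic_cube_iff)
    moreover have "sidelen R \<le> sidelen W" using W R l by (auto intro: dyadic_subset_sidelen_le)
    ultimately show "W \<in> (\<lambda>j. dyadic_cube a l j (dyadic_index a l j x)) ` ?J"
      using W W_eq l by (auto simp: sidelen_dyadic_cube)
  qed
  then show ?thesis
    by (rule finite_subset) (intro finite_imageI finite_dyadic_levels sidelen_dyadic_pos[OF l R] l)
qed

definition maximal_sets :: "'a set set \<Rightarrow> 'a set set" where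
  "maximal_sets \<S> = {W \<in> \<S>. \<forall>W'\<in>\<S>. W \<subseteq> W' \<longrightarrow> W' = W}"

lemma disjoint_maximal_sets_dyadic:
  assumes "0 < l" "\<S> \<subseteq> dyadic a l"
  shows "disjoint (maximal_sets \<S>)"
  unfolding disjoint_def
proof (intro ballI impI)
  fix W W' assume "W \<in> maximal_sets \<S>" "W' \<in> maximal_sets \<S>" "W \<noteq> W'"
  then have "W \<in> dyadic a l" "W' \<in> dyadic a l" "\<not> W \<subseteq> W'" "\<not> W' \<subseteq> W"
    using assms(2) by (auto simp: maximal_sets_def)
  then show "W \<inter> W' = {}"
    using dyadic_laminar[OF assms(1), of W a W'] by simp
qed

lemma Union_maximal_sets_dyadic:
  assumes l: "0 < l" and S: "\<S> \<subseteq> dyadic a l" and bounded: "\<forall>S\<in>\<S>. sidelen S \<le> B"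
  shows "\<Union>(maximal_sets \<S>) = \<Union>\<S>"
proof
  show "\<Union>\<S> \<subseteq> \<Union>(maximal_sets \<S>)"
  proof
    fix x assume "x \<in> \<Union>\<S>"
    then obtain R where R: "R \<in> \<S>" "x \<in> R" by blast
    define \<A> where "\<A> = {W \<in> \<S>. R \<subseteq> W}"
    have "finite \<A>"
      unfolding \<A>_def
      by (rule finite_subset[OF _ finite_dyadic_supersets[OF l, of R a B]]) (use R S bounded in auto)
    moreover have "R \<in> \<A>" using R by (simp add: \<A>_def)
    ultimately obtain W where W: "W \<in> \<A>" "R \<subseteq> W" "\<forall>W'\<in>\<A>. W \<subseteq> W' \<longrightarrow> W = W'"
      using finite_has_maximal2 by blast
    have "W \<in> maximal_sets \<S>"
      unfolding maximal_sets_def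
    proof (intro CollectI conjI ballI impI)
      show "W \<in> \<S>" using W(1) by (simp add: \<A>_def)
      fix W' assume "W' \<in> \<S>" "W \<subseteq> W'"
      then have "W' \<in> \<A>" using W(2) by (auto simp: \<A>_def)
      then show "W' = W" using W(3) \<open>W \<subseteq> W'\<close> by (simp add: eq_commute)
    qed
    then show "x \<in> \<Union>(maximal_sets \<S>)"
      using R W(2) by blast
  qed
qed (auto simp: maximal_sets_def)

section \<open>Content and infinite sums\<close>

lemma hcont_mono: "S \<subseteq> T \<Longrightarrow> hcont \<beta> a l S \<le> hcont \<beta> a l T"
  unfolding hcont_def by (rule Inf_superset_mono) blast

lemma hcont_le_cover:
  assumes "countable \<C>" "\<C> \<subseteq> dyadic a l" "S \<subseteq> \<Union>\<C>"
  shows "hcont \<beta> a l S \<le> (\<Sum>\<^sub>\<infinity> C\<in>\<C>. ennreal (sidelen C powr \<beta>))"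
  unfolding hcont_def by (rule Inf_lower) (use assms in blast)

lemma choquet_mono: "S \<subseteq> T \<Longrightarrow> choquet \<beta> a l S f \<le> choquet \<beta> a l T f"
  unfolding choquet_def by (intro nn_integral_mono mult_left_mono hcont_mono) auto

lemma le_enn2real_powr_inverse:
  assumes "0 < s" "0 < \<beta>" "ennreal (s powr \<beta>) \<le> T" "T \<noteq> \<infinity>"
  shows "s \<le> enn2real T powr (1 / \<beta>)"
proof -
  have "ennreal (s powr \<beta>) \<le> ennreal (enn2real T)"
    using assms(3,4) by (simp add: ennreal_enn2real_if)
  then have "s powr \<beta> \<le> enn2real T"
    by (simp add: ennreal_le_iff)
  then have "(s powr \<beta>) powr (1 / \<beta>) \<le> enn2real T powr (1 / \<beta>)"
    using assms by (intro powr_mono2) auto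
  then show ?thesis
    using assms by (simp add: powr_powr)
qed

lemma ennreal_summable_on [simp]: "(f :: 'a \<Rightarrow> ennreal) summable_on A"
  by (simp add: nonneg_summable_on_complete)

lemma infsum_mono_set_ennreal:
  fixes f :: "'a \<Rightarrow> ennreal"
  shows "A \<subseteq> B \<Longrightarrow> infsum f A \<le> infsum f B"
  by (rule infsum_mono_neutral) auto

lemma infsum_cmult_le_ennreal:
  fixes f :: "'a \<Rightarrow> ennreal"
  shows "(\<Sum>\<^sub>\<infinity>x\<in>A. c * f x) \<le> c * (\<Sum>\<^sub>\<infinity>x\<in>A. f x)"
proof (rule infsum_le_finite_sums)
  fix F assume F: "finite F" "F \<subseteq> A"
  have "(\<Sum>x\<in>F. f x) = (\<Sum>\<^sub>\<infinity>x\<in>F. f x)"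
    using F(1) by simp
  also have "\<dots> \<le> (\<Sum>\<^sub>\<infinity>x\<in>A. f x)"
    using F(2) by (rule infsum_mono_set_ennreal)
  finally show "(\<Sum>x\<in>F. c * f x) \<le> c * (\<Sum>\<^sub>\<infinity>x\<in>A. f x)"
    by (simp add: sum_distrib_left[symmetric] mult_left_mono)
qed simp

lemma infsum_infsum_subsets_le:
  fixes f :: "'a set \<Rightarrow> ennreal"
  assumes "disjoint \<W>" "{} \<notin> M"
  shows "(\<Sum>\<^sub>\<infinity>W\<in>\<W>. \<Sum>\<^sub>\<infinity>R\<in>{R \<in> M. R \<subseteq> W}. f R) \<le> (\<Sum>\<^sub>\<infinity>R\<in>M. f R)"
proof (rule infsum_le_finite_sums)
  fix F assume F: "finite F" "F \<subseteq> \<W>"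
  have "{R \<in> M. R \<subseteq> W} \<inter> {R \<in> M. R \<subseteq> W'} = {}" if "W \<in> F" "W' \<in> F" "W \<noteq> W'" for W W'
  proof -
    have "W \<inter> W' = {}" using that F assms(1) by (auto simp: disjoint_def)
    then show ?thesis
      using assms(2) by (metis (no_types, lifting) Int_emptyI le_inf_iff mem_Collect_eq subset_empty)
  qed
  then have "(\<Sum>W\<in>F. \<Sum>\<^sub>\<infinity>R\<in>{R \<in> M. R \<subseteq> W}. f R) = (\<Sum>\<^sub>\<infinity>R\<in>(\<Union>W\<in>F. {R \<in> M. R \<subseteq> W}). f R)"
    by (intro sum_infsum F) auto
  also have "\<dots> \<le> (\<Sum>\<^sub>\<infinity>R\<in>M. f R)"
    by (rule infsum_mono_set_ennreal) auto
  finally show "(\<Sum>W\<in>F. \<Sum>\<^sub>\<infinity>R\<in>{R \<in> M. R \<subseteq> W}. f R) \<le> (\<Sum>\<^sub>\<infinity>R\<in>M. f R)" .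
qed simp

section \<open>Packing subfamilies\<close>

definition mass_inside :: "real \<Rightarrow> (real^'n) set set \<Rightarrow> (real^'n) set \<Rightarrow> ennreal" where
  "mass_inside \<beta> M W = (\<Sum>\<^sub>\<infinity>R\<in>{R \<in> M. R \<subseteq> W}. ennreal (sidelen R powr \<beta>))"

definition dyadic_packing :: "real \<Rightarrow> real^'n \<Rightarrow> real \<Rightarrow> (real^'n) set set \<Rightarrow> bool" where
  "dyadic_packing \<beta> a l M \<longleftrightarrow>
     (\<forall>Q'\<in>dyadic a l. mass_inside \<beta> M Q' \<le> ennreal (2 * sidelen Q' powr \<beta>))"

lemma dyadic_packing_Union_chain:
  assumes chain: "subset.chain \<A> \<C>" and packing: "\<And>M. M \<in> \<C> \<Longrightarrow> dyadic_packing \<beta> a l M"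
  shows "dyadic_packing \<beta> a l (\<Union>\<C>)"
  unfolding dyadic_packing_def mass_inside_def
proof (intro ballI infsum_le_finite_sums)
  fix Q' F assume Q': "Q' \<in> dyadic a l" and F: "finite F" "F \<subseteq> {R \<in> \<Union>\<C>. R \<subseteq> Q'}"
  show "(\<Sum>R\<in>F. ennreal (sidelen R powr \<beta>)) \<le> ennreal (2 * sidelen Q' powr \<beta>)"
  proof (cases "F = {}")
    case False
    then obtain M where M: "M \<in> \<C>" "F \<subseteq> M"
      using finite_subset_Union_chain[OF F(1) _ _ chain] F(2) by blast
    have "(\<Sum>R\<in>F. ennreal (sidelen R powr \<beta>)) = (\<Sum>\<^sub>\<infinity>R\<in>F. ennreal (sidelen R powr \<beta>))"
      using F(1) by simp
    also have "\<dots> \<le> mass_inside \<beta> M Q'"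
      unfolding mass_inside_def by (rule infsum_mono_set_ennreal) (use F M in auto)
    also have "\<dots> \<le> ennreal (2 * sidelen Q' powr \<beta>)"
      using packing[OF M(1)] Q' by (auto simp: dyadic_packing_def)
    finally show ?thesis .
  qed simp
qed simp

lemma maximal_dyadic_packing_exists:
  obtains M where "M \<subseteq> \<P>" "dyadic_packing \<beta> a l M"
    "\<And>P. P \<in> \<P> \<Longrightarrow> P \<notin> M \<Longrightarrow> \<not> dyadic_packing \<beta> a l (insert P M)"
proof -
  let ?\<A> = "{M. M \<subseteq> \<P> \<and> dyadic_packing \<beta> a l M}"
  have chain_Union: "\<Union>\<C> \<in> ?\<A>" if chain: "subset.chain ?\<A> \<C>" for \<C>
  proof -
    have "\<C> \<subseteq> ?\<A>" using chain unfolding subset.chain_def by blast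
    then show ?thesis using dyadic_packing_Union_chain[OF chain] by blast
  qed
  obtain M where M: "M \<subseteq> \<P>" "dyadic_packing \<beta> a l M"
    and maximal: "\<forall>X\<in>?\<A>. M \<subseteq> X \<longrightarrow> X = M"
    using subset_Zorn'[OF chain_Union] by auto
  show ?thesis
  proof (rule that[OF M])
    fix P assume "P \<in> \<P>" "P \<notin> M"
    then show "\<not> dyadic_packing \<beta> a l (insert P M)"
      using maximal M(1) by blast
  qed
qed

lemma heavy_cube_above:
  assumes l: "0 < l" and \<beta>: "0 < \<beta>" and P: "P \<in> dyadic a l"
    and packing: "dyadic_packing \<beta> a l M" and not_packing: "\<not> dyadic_packing \<beta> a l (insert P M)"
  obtains W where "W \<in> dyadic a l" "P \<subseteq> W" "ennreal (sidelen W powr \<beta>) \<le> mass_inside \<beta> M W"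
proof -
  obtain W where W: "W \<in> dyadic a l"
    and violated: "\<not> mass_inside \<beta> (insert P M) W \<le> ennreal (2 * sidelen W powr \<beta>)"
    using not_packing unfolding dyadic_packing_def by blast
  have PW: "P \<subseteq> W"
  proof (rule ccontr)
    assume "\<not> P \<subseteq> W"
    then have "{R \<in> insert P M. R \<subseteq> W} = {R \<in> M. R \<subseteq> W}" by auto
    then have "mass_inside \<beta> (insert P M) W = mass_inside \<beta> M W"
      unfolding mass_inside_def by simp
    then show False
      using violated packing W by (auto simp: dyadic_packing_def)
  qed
  have P_notin: "P \<notin> M"
    using packing not_packing by (metis insert_absorb)
  have mass_insert: "mass_inside \<beta> (insert P M) W = ennreal (sidelen P powr \<beta>) + mass_inside \<beta> M W"
  proof -
    have "{R \<in> insert P M. R \<subseteq> W} = insert P {R \<in> M. R \<subseteq> W}" using PW by auto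
    then show ?thesis
      unfolding mass_inside_def by (simp add: infsum_insert P_notin)
  qed
  have side: "sidelen P powr \<beta> \<le> sidelen W powr \<beta>"
    using dyadic_subset_sidelen_le[OF l P W PW] sidelen_dyadic_pos[OF l P] \<beta>
    by (intro powr_mono2) auto
  have "ennreal (sidelen W powr \<beta>) \<le> mass_inside \<beta> M W"
  proof (rule contrapos_np[OF violated])
    assume "\<not> ennreal (sidelen W powr \<beta>) \<le> mass_inside \<beta> M W"
    then have "ennreal (sidelen P powr \<beta>) + mass_inside \<beta> M W
        \<le> ennreal (sidelen W powr \<beta>) + ennreal (sidelen W powr \<beta>)"
      using side by (intro add_mono) auto
    also have "\<dots> = ennreal (2 * sidelen W powr \<beta>)"
      by (simp add: ennreal_plus[symmetric] del: ennreal_plus)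
    finally show "mass_inside \<beta> (insert P M) W \<le> ennreal (2 * sidelen W powr \<beta>)"
      using mass_insert by simp
  qed
  then show ?thesis
    using that W PW by blast
qed

lemma hcont_Union_heavy_le:
  assumes l: "0 < l" and \<beta>: "0 < \<beta>" and M: "M \<subseteq> dyadic a l" and \<W>: "\<W> \<subseteq> dyadic a l"
    and heavy: "\<And>W. W \<in> \<W> \<Longrightarrow> ennreal (sidelen W powr \<beta>) \<le> mass_inside \<beta> M W"
  shows "hcont \<beta> a l (\<Union>\<W>) \<le> (\<Sum>\<^sub>\<infinity>R\<in>M. ennreal (sidelen R powr \<beta>))" (is "_ \<le> ?T")
proof (cases "?T = \<infinity>")
  case False
  have bounded: "\<forall>W\<in>\<W>. sidelen W \<le> enn2real ?T powr (1 / \<beta>)"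
  proof
    fix W assume W: "W \<in> \<W>"
    have "mass_inside \<beta> M W \<le> ?T"
      unfolding mass_inside_def by (rule infsum_mono_set_ennreal) auto
    then have "ennreal (sidelen W powr \<beta>) \<le> ?T"
      using heavy[OF W] by (rule order_trans[rotated])
    then show "sidelen W \<le> enn2real ?T powr (1 / \<beta>)"
      using sidelen_dyadic_pos[OF l] W \<W> \<beta> False by (intro le_enn2real_powr_inverse) auto
  qed
  have max_sub: "maximal_sets \<W> \<subseteq> \<W>"
    by (auto simp: maximal_sets_def)
  have "hcont \<beta> a l (\<Union>\<W>) \<le> (\<Sum>\<^sub>\<infinity>W\<in>maximal_sets \<W>. ennreal (sidelen W powr \<beta>))"
  proof (rule hcont_le_cover)
    show "countable (maximal_sets \<W>)"
      by (rule countable_subset[OF _ countable_dyadic[of a l]]) (use max_sub \<W> in blast)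
    show "maximal_sets \<W> \<subseteq> dyadic a l"
      using max_sub \<W> by simp
    show "\<Union>\<W> \<subseteq> \<Union>(maximal_sets \<W>)"
      using Union_maximal_sets_dyadic[OF l \<W> bounded] by simp
  qed
  also have "\<dots> \<le> (\<Sum>\<^sub>\<infinity>W\<in>maximal_sets \<W>. mass_inside \<beta> M W)"
    using max_sub heavy by (intro infsum_mono) auto
  also have "\<dots> \<le> ?T"
    unfolding mass_inside_def
    using disjoint_maximal_sets_dyadic[OF l \<W>] dyadic_nonempty[OF l] M
    by (intro infsum_infsum_subsets_le) auto
  finally show ?thesis .
qed simp

lemma hcont_Union_le_packing:
  assumes l: "0 < l" and \<beta>: "0 < \<beta>" and \<P>: "\<P> \<subseteq> dyadic a l"
  obtains M where "M \<subseteq> \<P>" "dyadic_packing \<beta> a l M"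
    "hcont \<beta> a l (\<Union>\<P>) \<le> (\<Sum>\<^sub>\<infinity>R\<in>M. ennreal (sidelen R powr \<beta>))"
proof -
  obtain M where M: "M \<subseteq> \<P>" "dyadic_packing \<beta> a l M"
    and maximal: "\<And>P. P \<in> \<P> \<Longrightarrow> P \<notin> M \<Longrightarrow> \<not> dyadic_packing \<beta> a l (insert P M)"
    using maximal_dyadic_packing_exists by blast
  define \<W> where "\<W> = {W \<in> dyadic a l. ennreal (sidelen W powr \<beta>) \<le> mass_inside \<beta> M W}"
  have "P \<subseteq> \<Union>\<W>" if P: "P \<in> \<P>" for P
  proof (cases "P \<in> M")
    case True
    have "ennreal (sidelen P powr \<beta>) = (\<Sum>\<^sub>\<infinity>R\<in>{P}. ennreal (sidelen R powr \<beta>))"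
      by simp
    also have "\<dots> \<le> mass_inside \<beta> M P"
      unfolding mass_inside_def by (rule infsum_mono_set_ennreal) (use True in auto)
    finally show ?thesis
      using P \<P> by (auto simp: \<W>_def)
  next
    case False
    obtain W where "W \<in> dyadic a l" "P \<subseteq> W" "ennreal (sidelen W powr \<beta>) \<le> mass_inside \<beta> M W"
      using heavy_cube_above[OF l \<beta> _ M(2) maximal[OF P False]] P \<P> by blast
    then show ?thesis
      by (auto simp: \<W>_def)
  qed
  then have "hcont \<beta> a l (\<Union>\<P>) \<le> hcont \<beta> a l (\<Union>\<W>)"
    by (intro hcont_mono) blast
  also have "\<dots> \<le> (\<Sum>\<^sub>\<infinity>R\<in>M. ennreal (sidelen R powr \<beta>))"
    by (rule hcont_Union_heavy_le[OF l \<beta>]) (use M \<P> in \<open>auto simp: \<W>_def\<close>)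
  finally show ?thesis
    using that M by blast
qed

lemma hcont_Union_le_choquet:
  assumes l: "0 < l" and \<beta>: "0 < \<beta>" and \<P>: "\<P> \<subseteq> dyadic a l" "disjoint \<P>"
    and heavy: "\<And>P. P \<in> \<P> \<Longrightarrow> ennreal (sidelen P powr \<beta>) \<le> c * choquet \<beta> a l P g"
    and packing_bound: "\<And>M. M \<subseteq> dyadic a l \<Longrightarrow> disjoint M \<Longrightarrow> dyadic_packing \<beta> a l M \<Longrightarrow>
        (\<Sum>\<^sub>\<infinity>R\<in>M. choquet \<beta> a l R g) \<le> ennreal C' * choquet \<beta> a l (\<Union>M) g"
  shows "hcont \<beta> a l (\<Union>\<P>) \<le> c * (ennreal C' * choquet \<beta> a l UNIV g)"
proof -
  obtain M where M: "M \<subseteq> \<P>" "dyadic_packing \<beta> a l M"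
    and cover: "hcont \<beta> a l (\<Union>\<P>) \<le> (\<Sum>\<^sub>\<infinity>R\<in>M. ennreal (sidelen R powr \<beta>))"
    using hcont_Union_le_packing[OF l \<beta> \<P>(1)] .
  note cover
  also have "(\<Sum>\<^sub>\<infinity>R\<in>M. ennreal (sidelen R powr \<beta>)) \<le> (\<Sum>\<^sub>\<infinity>R\<in>M. c * choquet \<beta> a l R g)"
    using M(1) heavy by (intro infsum_mono) auto
  also have "\<dots> \<le> c * (\<Sum>\<^sub>\<infinity>R\<in>M. choquet \<beta> a l R g)"
    by (rule infsum_cmult_le_ennreal)
  also have "(\<Sum>\<^sub>\<infinity>R\<in>M. choquet \<beta> a l R g) \<le> ennreal C' * choquet \<beta> a l (\<Union>M) g"
    using M \<P> by (intro packing_bound) (auto intro: pairwise_subset)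
  also have "choquet \<beta> a l (\<Union>M) g \<le> choquet \<beta> a l UNIV g"
    by (rule choquet_mono) simp
  finally show ?thesis
    by (simp add: mult_left_mono)
qed

section \<open>The weak-type estimate\<close>

lemma maxfun_superlevel_subset:
  assumes l: "0 < l" and t: "0 < t"
  shows "{x. ennreal t < maxfun \<beta> a l f x}
    \<subseteq> \<Union>{Q \<in> dyadic a l. ennreal (sidelen Q powr \<beta>) \<le> ennreal (1 / t) * choquet \<beta> a l Q (\<lambda>y. \<bar>f y\<bar>)}"
proof
  fix x assume "x \<in> {x. ennreal t < maxfun \<beta> a l f x}"
  then obtain Q where Q: "Q \<in> dyadic a l" and
    lt: "ennreal t < indicator Q x * ennreal (sidelen Q powr (- \<beta>)) * choquet \<beta> a l Q (\<lambda>y. \<bar>f y\<bar>)"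
    by (auto simp: maxfun_def less_SUP_iff)
  then have x: "x \<in> Q"
    by (cases "x \<in> Q") auto
  define s where "s = sidelen Q"
  define A where "A = choquet \<beta> a l Q (\<lambda>y. \<bar>f y\<bar>)"
  have s: "0 < s"
    using sidelen_dyadic_pos[OF l Q] by (simp add: s_def)
  have "ennreal (s powr \<beta>) = ennreal (s powr \<beta> / t) * ennreal t"
    using s t by (simp add: ennreal_mult[symmetric])
  also have "\<dots> \<le> ennreal (s powr \<beta> / t) * (ennreal (s powr (- \<beta>)) * A)"
    using lt x by (intro mult_left_mono) (auto simp: s_def A_def)
  also have "\<dots> = ennreal (s powr \<beta> / t * s powr (- \<beta>)) * A"
    using s t by (simp add: ennreal_mult[symmetric] mult.assoc[symmetric])
  also have "s powr \<beta> / t * s powr (- \<beta>) = 1 / t"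
    using s by (simp add: powr_minus field_simps)
  finally show "x \<in> \<Union>{Q \<in> dyadic a l. ennreal (sidelen Q powr \<beta>) \<le> ennreal (1 / t) * choquet \<beta> a l Q (\<lambda>y. \<bar>f y\<bar>)}"
    using Q x by (auto simp: s_def A_def)
qed

lemma superlevel_cube_sidelen_le:
  assumes l: "0 < l" and \<beta>: "0 < \<beta>" and finite: "choquet \<beta> a l UNIV g \<noteq> \<infinity>"
    and Q: "Q \<in> dyadic a l" and heavy: "ennreal (sidelen Q powr \<beta>) \<le> ennreal c * choquet \<beta> a l Q g"
  shows "sidelen Q \<le> enn2real (ennreal c * choquet \<beta> a l UNIV g) powr (1 / \<beta>)"
proof (rule le_enn2real_powr_inverse[OF sidelen_dyadic_pos[OF l Q] \<beta>])
  show "ennreal (sidelen Q powr \<beta>) \<le> ennreal c * choquet \<beta> a l UNIV g"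
    using heavy by (rule order_trans) (intro mult_left_mono choquet_mono; simp)
  show "ennreal c * choquet \<beta> a l UNIV g \<noteq> \<infinity>"
    using finite by (simp add: ennreal_mult_eq_top_iff)
qed

lemma hcont_maxfun_superlevel_le:
  assumes l: "0 < l" and \<beta>: "0 < \<beta>" and t: "0 < t"
    and finite: "choquet \<beta> a l UNIV (\<lambda>y. \<bar>f y\<bar>) \<noteq> \<infinity>"
    and packing_bound: "\<And>M. M \<subseteq> dyadic a l \<Longrightarrow> disjoint M \<Longrightarrow> dyadic_packing \<beta> a l M \<Longrightarrow>
        (\<Sum>\<^sub>\<infinity>R\<in>M. choquet \<beta> a l R (\<lambda>y. \<bar>f y\<bar>)) \<le> ennreal C' * choquet \<beta> a l (\<Union>M) (\<lambda>y. \<bar>f y\<bar>)"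
  shows "hcont \<beta> a l {x. ennreal t < maxfun \<beta> a l f x}
    \<le> ennreal (1 / t) * (ennreal C' * choquet \<beta> a l UNIV (\<lambda>y. \<bar>f y\<bar>))"
proof -
  define \<G> where "\<G> = {Q \<in> dyadic a l.
    ennreal (sidelen Q powr \<beta>) \<le> ennreal (1 / t) * choquet \<beta> a l Q (\<lambda>y. \<bar>f y\<bar>)}"
  have \<G>: "\<G> \<subseteq> dyadic a l"
    by (auto simp: \<G>_def)
  have "\<forall>Q\<in>\<G>. sidelen Q \<le> enn2real (ennreal (1 / t) * choquet \<beta> a l UNIV (\<lambda>y. \<bar>f y\<bar>)) powr (1 / \<beta>)"
    using superlevel_cube_sidelen_le[OF l \<beta> finite] by (auto simp: \<G>_def)
  then have "{x. ennreal t < maxfun \<beta> a l f x} \<subseteq> \<Union>(maximal_sets \<G>)"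
    using maxfun_superlevel_subset[OF l t] Union_maximal_sets_dyadic[OF l \<G>] by (simp add: \<G>_def)
  then have "hcont \<beta> a l {x. ennreal t < maxfun \<beta> a l f x} \<le> hcont \<beta> a l (\<Union>(maximal_sets \<G>))"
    by (rule hcont_mono)
  also have "\<dots> \<le> ennreal (1 / t) * (ennreal C' * choquet \<beta> a l UNIV (\<lambda>y. \<bar>f y\<bar>))"
  proof (rule hcont_Union_le_choquet[OF l \<beta> _ _ _ packing_bound])
    show "maximal_sets \<G> \<subseteq> dyadic a l" "disjoint (maximal_sets \<G>)"
      using \<G> disjoint_maximal_sets_dyadic[OF l \<G>] by (auto simp: maximal_sets_def)
    show "ennreal (sidelen P powr \<beta>) \<le> ennreal (1 / t) * choquet \<beta> a l P (\<lambda>y. \<bar>f y\<bar>)"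
      if "P \<in> maximal_sets \<G>" for P
      using that by (simp add: maximal_sets_def \<G>_def)
  qed
  finally show ?thesis .
qed

theorem theorem3p1:
  fixes \<beta> :: real and a :: "real^'n" and l :: real and C' :: real
  assumes "0 < \<beta>" and "\<beta> \<le> real CARD('n)"
    and "0 < l"
    and "0 < C'"
    and hyp: "\<And>(f :: real^'n \<Rightarrow> real) \<Q>.
       (\<forall>x. 0 \<le> f x) \<Longrightarrow> \<Q> \<subseteq> dyadic a l \<Longrightarrow> disjoint \<Q> \<Longrightarrow>
       (\<forall>Q'\<in>dyadic a l. (\<Sum>\<^sub>\<infinity> R\<in>{R\<in>\<Q>. R \<subseteq> Q'}. ennreal (sidelen R powr \<beta>))
                          \<le> ennreal (2 * sidelen Q' powr \<beta>)) \<Longrightarrow>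
       (\<Sum>\<^sub>\<infinity> R\<in>\<Q>. choquet \<beta> a l R f) \<le> ennreal C' * choquet \<beta> a l (\<Union>\<Q>) f"
  shows "\<forall>t>0. \<forall>f\<in>L1_content \<beta> a l.
           hcont \<beta> a l {x. maxfun \<beta> a l f x > ennreal t}
             \<le> ennreal (C' / t) * choquet \<beta> a l UNIV (\<lambda>x. \<bar>f x\<bar>)"
proof (intro allI impI ballI)
  fix t :: real and f :: "real^'n \<Rightarrow> real"
  assume t: "0 < t"
  define I where "I = choquet \<beta> a l UNIV (\<lambda>x. \<bar>f x\<bar>)"
  have "hcont \<beta> a l {x. ennreal t < maxfun \<beta> a l f x} \<le> ennreal (1 / t) * (ennreal C' * I)"
  proof (cases "I = \<infinity>")
    case False
    show ?thesis
      unfolding I_def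
      by (rule hcont_maxfun_superlevel_le[OF \<open>0 < l\<close> \<open>0 < \<beta>\<close> t False[unfolded I_def]], rule hyp)
        (simp_all add: dyadic_packing_def mass_inside_def)
  qed (use t \<open>0 < C'\<close> in \<open>simp add: ennreal_mult_top\<close>)
  also have "ennreal (1 / t) * (ennreal C' * I) = ennreal (C' / t) * I"
    using t \<open>0 < C'\<close> by (simp add: ennreal_mult[symmetric] mult.assoc[symmetric])
  finally show "hcont \<beta> a l {x. maxfun \<beta> a l f x > ennreal t} \<le> ennreal (C' / t) * I" .
qed

end
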